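(* Suppose Assumptions 1–6 hold and Condition M1 holds, i.e. $\lim_{n\to\infty}M_n/m_n^{**}=0$. Then $\Delta_n=o\{R_n(m_n^* )\}$, i.e. $R_n(\mathbf w_n^* )/R_n(m_n^* )\to1$.
   Context: Setting. For each sample size $n$ one observes $\mathbf y=\boldsymbol\mu+\boldsymbol\varepsilon\in\mathbb R^n$ with $\boldsymbol\mu=\mathbf X\boldsymbol\beta$, where $\mathbf X=(x_{ij})$ is a nonstochastic $n\times p_n$ matrix with $p_n<n$, $E(\boldsymbol\varepsilon)=\mathbf 0$, $\mathrm{Cov}(\boldsymbol\varepsilon)=\boldsymbol\Omega$ positive definite (all may depend on $n$). Fix integers $0=\nu_0<\nu_1<\cdots<\nu_{q_n}=p_n$. For $m=1,\dots,q_n$, $\mathbf X_m$ is the $n\times\nu_m$ matrix of the first $\nu_m$ columns of $\mathbf X$ (full column rank), $\mathbf P_m=\mathbf X_m(\mathbf X_m^\top\mathbf X_m)^{-1}\mathbf X_m^\top$, $\mathbf P_0=\mathbf 0$. Candidate models are $m\in\{1,\dots,M_n\}$, $2\le M_n\le q_n$. $R_n(m)=E\|\mathbf P_m\mathbf y-\boldsymbol\mu\|^2$; for $\mathbf w\in\mathbb R^{M_n}$, $R_n(\mathbf w)=E\|\sum_{m=1}^{M_n}w_m\mathbf P_m\mathbf y-\boldsymbol\mu\|^2$. $\mathcal W_n=\{\mathbf w\in[0,1]^{M_n}:\sum_m w_m=1\}$. $m_n^*$ minimizes $R_n(m)$ over $\{1,\dots,M_n\}$, $m_n^{**}$ over $\{1,\dots,q_n\}$,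 $\mathbf w_n^*$ minimizes $R_n(\mathbf w)$ over $\mathcal W_n$ (all unique); $\Delta_n=R_n(m_n^* )-R_n(\mathbf w_n^* )$. $\theta_{n,m}=\dfrac{n^{-1}\boldsymbol\mu^\top(\mathbf P_m-\mathbf P_{m-1})\boldsymbol\mu}{\mathrm{tr}\{(\mathbf P_m-\mathbf P_{m-1})\boldsymbol\Omega\}}$, $m=1,\dots,q_n$; $d_n=\max\{m:\theta_{n,m}>0\}$. Assumption 1: $\|\boldsymbol\mu\|^2/n=O(1)$. Assumption 2: constants $0<c_1\le c_2<\infty$ with $c_1<\lambda_{\min}(\boldsymbol\Omega)\le\lambda_{\max}(\boldsymbol\Omega)<c_2$. Assumption 3: for each large $n$, $\theta_{n,1}\ge\cdots\ge\theta_{n,q_n}$. Assumption 4: a constant $V\ge1$ with $\max_{1\le m\le d_n}(\nu_m-\nu_{m-1})\le V$ for all large $n$. Assumption 5: for every fixed positive integer $m$ there are $\bar\theta_m>0$, $K_m>0$ such that for all $n\ge K_m$, $m\le d_n$ and $\theta_{n,m}\ge\bar\theta_m$. Assumption 6: for each large $n$ there is $m_n'\in\{1,\dots,d_n-1\}$ with $R_n(m)<R_n(m-1)$ for $2\le m\le m_n'$, $R_n(m)\ge R_n(m-1)$ for $m_n'<m\le d_n$, and $R_n(d_n)>R_n(d_n-1)$. *)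

theory Defs
  imports "Jordan_Normal_Form.Matrix" "Jordan_Normal_Form.Char_Poly"
    "Jordan_Normal_Form.Gauss_Jordan_Elimination" "Jordan_Normal_Form.DL_Rank"
    "HOL-Library.Landau_Symbols"
begin

definition mtrace :: "real mat \<Rightarrow> real" where
  "mtrace A = (\<Sum>i<dim_row A. A $$ (i, i))"

definition sqnorm :: "real vec \<Rightarrow> real" where
  "sqnorm v = v \<bullet> v"

definition first_cols :: "real mat \<Rightarrow> nat \<Rightarrow> real mat" where
  "first_cols X k = mat (dim_row X) k (\<lambda>(i, j). X $$ (i, j))"

definition hat :: "real mat \<Rightarrow> (nat \<Rightarrow> nat) \<Rightarrow> nat \<Rightarrow> real mat" where
  "hat X \<nu> m = (if m = 0 then 0\<^sub>m (dim_row X) (dim_row X) else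
     (let Xm = first_cols X (\<nu> m) in
        Xm * the (mat_inverse (transpose_mat Xm * Xm)) * transpose_mat Xm))"

text \<open>Risk E||A y - mu||^2 for y = mu + eps, E eps = 0, Cov eps = Omega:
  it equals ||A mu - mu||^2 + tr(A Omega A^T).\<close>
definition lin_risk :: "real mat \<Rightarrow> real vec \<Rightarrow> real mat \<Rightarrow> real" where
  "lin_risk A \<mu> \<Omega> = sqnorm (A *\<^sub>v \<mu> - \<mu>) + mtrace (A * \<Omega> * transpose_mat A)"

definition avg_hat :: "real mat \<Rightarrow> (nat \<Rightarrow> nat) \<Rightarrow> nat \<Rightarrow> (nat \<Rightarrow> real) \<Rightarrow> real mat" where
  "avg_hat X \<nu> M w = mat (dim_row X) (dim_row X)
     (\<lambda>(i, j). \<Sum>m\<in>{1..M}. w m * hat X \<nu> m $$ (i, j))"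

definition risk_model :: "real mat \<Rightarrow> (nat \<Rightarrow> nat) \<Rightarrow> real vec \<Rightarrow> real mat \<Rightarrow> nat \<Rightarrow> real" where
  "risk_model X \<nu> \<mu> \<Omega> m = lin_risk (hat X \<nu> m) \<mu> \<Omega>"

definition risk_weight :: "real mat \<Rightarrow> (nat \<Rightarrow> nat) \<Rightarrow> nat \<Rightarrow> real vec \<Rightarrow> real mat \<Rightarrow> (nat \<Rightarrow> real) \<Rightarrow> real" where
  "risk_weight X \<nu> M \<mu> \<Omega> w = lin_risk (avg_hat X \<nu> M w) \<mu> \<Omega>"

definition weight_set :: "nat \<Rightarrow> (nat \<Rightarrow> real) set" where
  "weight_set M = {w. (\<forall>m\<in>{1..M}. 0 \<le> w m \<and> w m \<le> 1) \<and> (\<forall>m. m \<notin> {1..M} \<longrightarrow> w m = 0)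
                     \<and> (\<Sum>m\<in>{1..M}. w m) = 1}"

definition theta :: "real mat \<Rightarrow> (nat \<Rightarrow> nat) \<Rightarrow> real vec \<Rightarrow> real mat \<Rightarrow> nat \<Rightarrow> real" where
  "theta X \<nu> \<mu> \<Omega> m =
     (\<mu> \<bullet> ((hat X \<nu> m - hat X \<nu> (m - 1)) *\<^sub>v \<mu>) / real (dim_row X))
     / mtrace ((hat X \<nu> m - hat X \<nu> (m - 1)) * \<Omega>)"

definition dn :: "real mat \<Rightarrow> (nat \<Rightarrow> nat) \<Rightarrow> nat \<Rightarrow> real vec \<Rightarrow> real mat \<Rightarrow> nat" where
  "dn X \<nu> q \<mu> \<Omega> = (let S = {m\<in>{1..q}. theta X \<nu> \<mu> \<Omega> m > 0} in if S = {} then 0 else Max S)"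

end

theory Submission
  imports Defs "HOL-Analysis.Function_Topology"
begin

text \<open>
  Averaging the nested hat matrices \<open>P\<^sub>1, ..., P\<^sub>M\<close> gives a matrix \<open>A\<close> with \<open>P\<^sub>M A = A\<close>,
  so by Pythagoras its squared bias is at least the bias \<open>b\<^sub>M = |P\<^sub>M \<mu> - \<mu>|\<^sup>2\<close> of model \<open>M\<close>.
  Hence \<open>b\<^sub>M \<le> R(w\<^sup>*) \<le> R(m\<^sup>*) \<le> R(M) \<le> b\<^sub>M + c\<^sub>2 \<nu>\<^sub>M\<close>.
  Beyond \<open>d\<^sub>n\<close> the models add no signal (\<open>\<theta> \<le> 0\<close>) but strictly more variance, so the optimal
  model \<open>s = m\<^sup>*\<^sup>*\<close> satisfies \<open>s \<le> d\<^sub>n\<close>, and Assumption 4 gives \<open>\<nu>\<^sub>M \<le> V M\<close>. Since \<open>s\<close> beats \<open>M\<close>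
  although its variance is larger by at least \<open>c\<^sub>1 (s - M)\<close>, that much must be bias of model \<open>M\<close>.
  Therefore \<open>1 - R(w\<^sup>*) / R(m\<^sup>*) \<le> c\<^sub>2 V M / b\<^sub>M \<le> (2 c\<^sub>2 V / c\<^sub>1) M / s\<close>, which tends to zero
  by condition M1. The eigenvalue bounds on \<open>\<Omega>\<close> are turned into bounds on its quadratic form
  by minimising the Rayleigh quotient over the (compact) unit sphere.
\<close>

section \<open>Quadratic forms and eigenvalues\<close>

abbreviation quad_form :: "(nat \<Rightarrow> nat \<Rightarrow> real) \<Rightarrow> nat \<Rightarrow> (nat \<Rightarrow> real) \<Rightarrow> real" where
  "quad_form B n x \<equiv> \<Sum>i<n. \<Sum>j<n. B i j * x i * x j"

abbreviation sum_sq :: "nat \<Rightarrow> (nat \<Rightarrow> real) \<Rightarrow> real" where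
  "sum_sq n x \<equiv> \<Sum>i<n. (x i)^2"

lemma sum_sq_eq_0_iff: "sum_sq n x = 0 \<longleftrightarrow> (\<forall>i<n. x i = 0)"
  by (subst sum_nonneg_eq_0_iff) auto

text \<open>The sphere is a closed subset of the cube \<open>[-1, 1]\<^sup>\<nat>\<close>, compact in the product topology.\<close>
lemma quad_form_attains_min_on_sphere:
  assumes n: "0 < n"
  defines "S \<equiv> {g. (\<forall>i. n \<le> i \<longrightarrow> g i = 0) \<and> sum_sq n g = 1}"
  shows "\<exists>g\<in>S. \<forall>h\<in>S. quad_form B n g \<le> quad_form B n h"
proof -
  let ?K = "Pi\<^sub>E UNIV (\<lambda>i::nat. {-1..1::real})"
  have "compactin (product_topology (\<lambda>i. euclidean) UNIV) ?K"
    by (simp add: compactin_PiE)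
  hence K: "compact ?K" by (simp add: euclidean_product_topology)
  have "closed {g::nat\<Rightarrow>real. g i = 0}" for i
    using closed_Collect_eq[of "\<lambda>g::nat\<Rightarrow>real. g i" "\<lambda>_. 0"] by simp
  hence support: "closed (\<Inter>i\<in>{n..}. {g::nat\<Rightarrow>real. g i = 0})"
    by blast
  have "continuous_on UNIV (sum_sq n)"
    by (intro continuous_intros continuous_on_product_then_coordinatewise continuous_on_id)
  hence sphere: "closed {g. sum_sq n g = 1}"
    using closed_Collect_eq[where f = "sum_sq n" and g = "\<lambda>_. 1"] by simp
  have "S \<subseteq> ?K"
  proof
    fix g assume g: "g \<in> S"
    have "\<bar>g i\<bar> \<le> 1" for i
    proof (cases "i < n")
      case True
      have "(g i)^2 \<le> sum_sq n g"
        using True by (intro member_le_sum) auto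
      thus ?thesis using g by (simp add: S_def abs_square_le_1)
    qed (use g in \<open>simp add: S_def\<close>)
    thus "g \<in> ?K" by (simp add: PiE_UNIV_domain abs_le_iff)
  qed
  hence "S = ?K \<inter> ((\<Inter>i\<in>{n..}. {g. g i = 0}) \<inter> {g. sum_sq n g = 1})"
    unfolding S_def by auto
  hence "compact S"
    using K support sphere by (metis compact_Int_closed closed_Int)
  moreover have "(\<lambda>i. if i = 0 then 1 else 0) \<in> S"
    using n by (simp add: S_def power2_eq_square if_distrib [where f = "\<lambda>x. x * _"] cong: if_cong)
  moreover have "continuous_on S (quad_form B n)"
    by (intro continuous_intros continuous_on_product_then_coordinatewise continuous_on_id)
  ultimately show ?thesis
    using continuous_attains_inf[of S "quad_form B n"] by blast
qed

lemma quad_form_perturb: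
  assumes sym: "\<And>i j. i < n \<Longrightarrow> j < n \<Longrightarrow> B i j = B j i"
  shows "quad_form B n (\<lambda>i. g i + t * r i)
    = quad_form B n g + 2 * t * (\<Sum>i<n. r i * (\<Sum>j<n. B i j * g j)) + t^2 * quad_form B n r"
proof -
  have expand: "B i j * (g i + t * r i) * (g j + t * r j) = B i j * g i * g j + t * (B i j * r i * g j)
     + t * (B i j * g i * r j) + t^2 * (B i j * r i * r j)" for i j
    by (simp add: algebra_simps power2_eq_square)
  have "(\<Sum>i<n. \<Sum>j<n. B i j * g i * r j) = (\<Sum>j<n. \<Sum>i<n. B i j * g i * r j)"
    by (rule sum.swap)
  also have "\<dots> = (\<Sum>j<n. \<Sum>i<n. B j i * r j * g i)"
    by (intro sum.cong refl) (simp add: sym mult.commute mult.left_commute)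
  finally have swap: "(\<Sum>i<n. \<Sum>j<n. B i j * g i * r j) = (\<Sum>i<n. \<Sum>j<n. B i j * r i * g j)" .
  have factor: "(\<Sum>i<n. \<Sum>j<n. B i j * r i * g j) = (\<Sum>i<n. r i * (\<Sum>j<n. B i j * g j))"
    by (simp add: sum_distrib_left mult.commute mult.left_commute)
  have "quad_form B n (\<lambda>i. g i + t * r i)
     = quad_form B n g + t * (\<Sum>i<n. \<Sum>j<n. B i j * r i * g j)
       + t * (\<Sum>i<n. \<Sum>j<n. B i j * g i * r j) + t^2 * quad_form B n r"
    by (simp add: expand sum.distrib sum_distrib_left)
  then show ?thesis unfolding swap factor by simp
qed

lemma linear_coeff_zero_if_quadratic_nonneg:
  fixes a K :: real
  assumes "0 \<le> a" and nonneg: "\<And>t. 0 \<le> 2 * t * a + t^2 * K"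
  shows "a = 0"
proof (rule ccontr)
  assume "a \<noteq> 0"
  hence a: "0 < a" using assms(1) by simp
  define t where "t = - a / (\<bar>K\<bar> + 1)"
  have "t * \<bar>K\<bar> = - a * (\<bar>K\<bar> / (\<bar>K\<bar> + 1))" by (simp add: t_def)
  moreover have "a * (\<bar>K\<bar> / (\<bar>K\<bar> + 1)) \<le> a"
    using a by (intro mult_left_le) auto
  ultimately have pos: "0 < 2 * a + t * \<bar>K\<bar>" using a by linarith
  have "0 \<le> 2 * t * a + t^2 * K" by (rule nonneg)
  also have "\<dots> \<le> 2 * t * a + t^2 * \<bar>K\<bar>"
    by (intro add_left_mono mult_left_mono) auto
  also have "\<dots> = t * (2 * a + t * \<bar>K\<bar>)" by (simp add: power2_eq_square algebra_simps)
  also have "\<dots> < 0" using pos a by (simp add: t_def mult_neg_pos)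
  finally show False by simp
qed

lemma quad_form_ge_min_on_sphere:
  assumes min: "\<And>h. (\<forall>i. n \<le> i \<longrightarrow> h i = 0) \<Longrightarrow> sum_sq n h = 1 \<Longrightarrow> lam \<le> quad_form B n h"
  shows "lam * sum_sq n x \<le> quad_form B n x"
proof (cases "sum_sq n x = 0")
  case True
  thus ?thesis by (simp add: sum_sq_eq_0_iff)
next
  case False
  hence pos: "0 < sum_sq n x" using sum_nonneg[of "{..<n}" "\<lambda>i. (x i)^2"] by fastforce
  define s where "s = sqrt (sum_sq n x)"
  have s: "0 < s" "s^2 = sum_sq n x" using pos by (simp_all add: s_def)
  define h where "h = (\<lambda>i. if i < n then x i / s else 0)"
  have "sum_sq n h = (\<Sum>i<n. (x i)^2 / s^2)" by (intro sum.cong) (auto simp: h_def power_divide)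
  also have "\<dots> = 1" using s pos by (simp add: sum_divide_distrib[symmetric])
  finally have "lam \<le> quad_form B n h" by (intro min) (simp_all add: h_def)
  also have "quad_form B n h = (\<Sum>i<n. \<Sum>j<n. B i j * x i * x j / s^2)"
    by (intro sum.cong) (auto simp: h_def power2_eq_square)
  also have "\<dots> = quad_form B n x / sum_sq n x" by (simp add: sum_divide_distrib s)
  finally show ?thesis using pos by (simp add: pos_le_divide_eq mult.commute)
qed

text \<open>First-order condition at the minimiser: perturbing \<open>g\<close> along the residual
  \<open>r = B g - \<lambda> g\<close> changes the Rayleigh inequality by \<open>2 t |r|\<^sup>2 + O(t\<^sup>2)\<close>.\<close>
lemma quad_form_minimiser_is_eigenvector:
  assumes sym: "\<And>i j. i < n \<Longrightarrow> j < n \<Longrightarrow> B i j = B j i"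
    and unit: "sum_sq n g = 1"
    and min: "\<And>x. quad_form B n g * sum_sq n x \<le> quad_form B n x"
  shows "\<forall>i<n. (\<Sum>j<n. B i j * g j) = quad_form B n g * g i"
proof -
  define lam where "lam = quad_form B n g"
  define r where "r = (\<lambda>i. (\<Sum>j<n. B i j * g j) - lam * g i)"
  have residual: "(\<Sum>i<n. r i * (\<Sum>j<n. B i j * g j)) - lam * (\<Sum>i<n. r i * g i) = sum_sq n r"
  proof -
    have "(\<Sum>i<n. r i * (\<Sum>j<n. B i j * g j)) - lam * (\<Sum>i<n. r i * g i)
        = (\<Sum>i<n. r i * (\<Sum>j<n. B i j * g j) - lam * (r i * g i))"
      by (simp add: sum_subtractf sum_distrib_left)
    also have "\<dots> = (\<Sum>i<n. r i * r i)"
      by (intro sum.cong refl) (simp add: r_def algebra_simps)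
    finally show ?thesis by (simp add: power2_eq_square)
  qed
  have "0 \<le> 2 * t * sum_sq n r + t^2 * (quad_form B n r - lam * sum_sq n r)" for t
  proof -
    have "(g i + t * r i)^2 = (g i)^2 + 2 * t * (r i * g i) + t^2 * (r i)^2" for i
      by (simp add: power2_eq_square algebra_simps)
    hence "sum_sq n (\<lambda>i. g i + t * r i) = sum_sq n g + 2 * t * (\<Sum>i<n. r i * g i) + t^2 * sum_sq n r"
      by (simp add: sum.distrib sum_distrib_left)
    hence "lam * (sum_sq n g + 2 * t * (\<Sum>i<n. r i * g i) + t^2 * sum_sq n r)
        \<le> quad_form B n (\<lambda>i. g i + t * r i)"
      using min[of "\<lambda>i. g i + t * r i"] by (simp add: lam_def)
    also have "\<dots> = quad_form B n g + 2 * t * (\<Sum>i<n. r i * (\<Sum>j<n. B i j * g j)) + t^2 * quad_form B n r"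
      by (rule quad_form_perturb[OF sym])
    finally show ?thesis using residual unit unfolding lam_def[symmetric]
      by (simp add: algebra_simps)
  qed
  hence "sum_sq n r = 0"
    by (intro linear_coeff_zero_if_quadratic_nonneg) (simp_all add: sum_nonneg)
  thus ?thesis by (simp add: sum_sq_eq_0_iff r_def lam_def)
qed

lemma scalar_prod_mult_mat_vec_eq_quad_form:
  assumes A: "A \<in> carrier_mat n n" and x: "x \<in> carrier_vec n"
  shows "x \<bullet> (A *\<^sub>v x) = quad_form (\<lambda>i j. A $$ (i, j)) n (\<lambda>i. x $ i)"
  using A x by (simp add: scalar_prod_def atLeast0LessThan sum_distrib_left ac_simps)

lemma scalar_prod_self_nonneg: "0 \<le> (v :: real vec) \<bullet> v"
  using conjugate_square_ge_0_vec[of v] by simp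

lemma scalar_prod_self_eq_sum_sq:
  assumes "x \<in> carrier_vec n"
  shows "x \<bullet> x = sum_sq n (\<lambda>i. x $ i)"
  using assms by (simp add: scalar_prod_def atLeast0LessThan power2_eq_square)

lemma quad_form_ge_of_eigenvalues_gt:
  fixes A :: "real mat"
  assumes A: "A \<in> carrier_mat n n" and sym: "transpose_mat A = A"
    and ev: "\<And>k. eigenvalue A k \<Longrightarrow> c < k" and x: "x \<in> carrier_vec n"
  shows "c * (x \<bullet> x) \<le> x \<bullet> (A *\<^sub>v x)"
proof (cases "n = 0")
  case True
  thus ?thesis using A x by (simp add: scalar_prod_def)
next
  case False
  let ?B = "\<lambda>i j. A $$ (i, j)"
  have symB: "?B i j = ?B j i" if "i < n" "j < n" for i j
    using that A arg_cong[OF sym, of "\<lambda>M. M $$ (i, j)"] by simp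
  obtain g where g: "\<forall>i. n \<le> i \<longrightarrow> g i = 0" "sum_sq n g = 1"
    and g_min: "\<And>h. (\<forall>i. n \<le> i \<longrightarrow> h i = 0) \<Longrightarrow> sum_sq n h = 1 \<Longrightarrow> quad_form ?B n g \<le> quad_form ?B n h"
    using quad_form_attains_min_on_sphere[of n ?B] False by auto
  define lam where "lam = quad_form ?B n g"
  have bound: "\<And>y. lam * sum_sq n y \<le> quad_form ?B n y"
    unfolding lam_def by (rule quad_form_ge_min_on_sphere) (rule g_min)
  have eigen: "\<forall>i<n. (\<Sum>j<n. ?B i j * g j) = lam * g i"
    unfolding lam_def by (rule quad_form_minimiser_is_eigenvector[OF symB g(2) bound[unfolded lam_def]])
  have "eigenvalue A lam"
    unfolding eigenvalue_def eigenvector_def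
  proof (intro exI conjI)
    show "vec n g \<in> carrier_vec (dim_row A)" using A by simp
    show "vec n g \<noteq> 0\<^sub>v (dim_row A)"
    proof
      assume "vec n g = 0\<^sub>v (dim_row A)"
      hence "\<forall>i<n. g i = 0" using A by (metis carrier_matD(1) index_vec index_zero_vec(1))
      thus False using g(2) by (simp add: sum_sq_eq_0_iff[symmetric])
    qed
    show "A *\<^sub>v vec n g = lam \<cdot>\<^sub>v vec n g"
      using A eigen by (intro eq_vecI) (auto simp: scalar_prod_def atLeast0LessThan mult.commute)
  qed
  hence "c < lam" by (rule ev)
  moreover have "0 \<le> x \<bullet> x" by (rule scalar_prod_self_nonneg)
  ultimately have "c * (x \<bullet> x) \<le> lam * (x \<bullet> x)" by (intro mult_right_mono) auto
  also have "\<dots> \<le> x \<bullet> (A *\<^sub>v x)"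
    using bound unfolding scalar_prod_mult_mat_vec_eq_quad_form[OF A x] scalar_prod_self_eq_sum_sq[OF x] .
  finally show ?thesis .
qed

lemma eigenvalue_uminus_mat:
  fixes A :: "real mat"
  assumes A: "A \<in> carrier_mat n n" and ev: "eigenvalue (- A) k"
  shows "eigenvalue A (- k)"
proof -
  from ev obtain v where v: "v \<in> carrier_vec n" "v \<noteq> 0\<^sub>v n" "- A *\<^sub>v v = k \<cdot>\<^sub>v v"
    using A by (auto simp: eigenvalue_def eigenvector_def)
  have "A *\<^sub>v v = - k \<cdot>\<^sub>v v"
  proof (rule eq_vecI)
    fix i assume "i < dim_vec (- k \<cdot>\<^sub>v v)"
    hence i: "i < n" using v by simp
    have "(- A *\<^sub>v v) $ i = (k \<cdot>\<^sub>v v) $ i" using v(3) by simp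
    thus "(A *\<^sub>v v) $ i = (- k \<cdot>\<^sub>v v) $ i" using A v(1) i by simp
  qed (use A v in simp)
  thus ?thesis using A v unfolding eigenvalue_def eigenvector_def by auto
qed

lemma quad_form_le_of_eigenvalues_lt:
  fixes A :: "real mat"
  assumes A: "A \<in> carrier_mat n n" and sym: "transpose_mat A = A"
    and ev: "\<And>k. eigenvalue A k \<Longrightarrow> k < c" and x: "x \<in> carrier_vec n"
  shows "x \<bullet> (A *\<^sub>v x) \<le> c * (x \<bullet> x)"
proof -
  have "eigenvalue A (- k)" if "eigenvalue (- A) k" for k
    using eigenvalue_uminus_mat[OF A that] .
  hence "- c * (x \<bullet> x) \<le> x \<bullet> (- A *\<^sub>v x)"
    using A sym x by (intro quad_form_ge_of_eigenvalues_gt[of "- A" n])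
      (auto simp: transpose_uminus dest: ev minus_less_iff[THEN iffD1])
  thus ?thesis using A x by simp
qed

section \<open>Traces and hat matrices\<close>

lemma mtrace_mult_comm:
  assumes A: "A \<in> carrier_mat n k" and B: "B \<in> carrier_mat k n"
  shows "mtrace (A * B) = mtrace (B * A)"
proof -
  have "mtrace (A * B) = (\<Sum>i<n. \<Sum>j<k. A $$ (i, j) * B $$ (j, i))"
    using A B by (simp add: mtrace_def scalar_prod_def atLeast0LessThan)
  also have "\<dots> = (\<Sum>j<k. \<Sum>i<n. A $$ (i, j) * B $$ (j, i))" by (rule sum.swap)
  also have "\<dots> = mtrace (B * A)"
    using A B by (simp add: mtrace_def scalar_prod_def atLeast0LessThan mult.commute)
  finally show ?thesis .
qed

lemma mtrace_minus:
  "A \<in> carrier_mat n n \<Longrightarrow> B \<in> carrier_mat n n \<Longrightarrow> mtrace (A - B) = mtrace A - mtrace B"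
  by (simp add: mtrace_def sum_subtractf)

lemma mtrace_sandwich_eq_sum_rows:
  assumes A: "A \<in> carrier_mat n n" and \<Omega>: "\<Omega> \<in> carrier_mat n n"
  shows "mtrace (A * \<Omega> * transpose_mat A) = (\<Sum>i<n. row A i \<bullet> (\<Omega> *\<^sub>v row A i))"
  unfolding mtrace_def
  using A \<Omega> by (intro sum.cong) (auto simp: scalar_prod_def atLeast0LessThan)

lemma mtrace_mult_transpose_eq_sum_rows:
  assumes A: "A \<in> carrier_mat n n"
  shows "mtrace (A * transpose_mat A) = (\<Sum>i<n. row A i \<bullet> row A i)"
  using mtrace_sandwich_eq_sum_rows[OF A one_carrier_mat] A by simp

lemma mtrace_sandwich_ge:
  assumes A: "A \<in> carrier_mat n n" and \<Omega>: "\<Omega> \<in> carrier_mat n n"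
    and ge: "\<And>x. x \<in> carrier_vec n \<Longrightarrow> c * (x \<bullet> x) \<le> x \<bullet> (\<Omega> *\<^sub>v x)"
  shows "c * mtrace (A * transpose_mat A) \<le> mtrace (A * \<Omega> * transpose_mat A)"
  unfolding mtrace_sandwich_eq_sum_rows[OF A \<Omega>] mtrace_mult_transpose_eq_sum_rows[OF A] sum_distrib_left
  using A by (intro sum_mono ge) simp

lemma mtrace_sandwich_le:
  assumes A: "A \<in> carrier_mat n n" and \<Omega>: "\<Omega> \<in> carrier_mat n n"
    and le: "\<And>x. x \<in> carrier_vec n \<Longrightarrow> x \<bullet> (\<Omega> *\<^sub>v x) \<le> c * (x \<bullet> x)"
  shows "mtrace (A * \<Omega> * transpose_mat A) \<le> c * mtrace (A * transpose_mat A)"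
  unfolding mtrace_sandwich_eq_sum_rows[OF A \<Omega>] mtrace_mult_transpose_eq_sum_rows[OF A] sum_distrib_left
  using A by (intro sum_mono le) simp

lemma (in vec_space) non_distinct_cols_low_rank:
  assumes A: "A \<in> carrier_mat n nc" and "\<not> distinct (cols A)"
  shows "rank A < nc"
proof -
  obtain S where S: "maximal S (\<lambda>T. T \<subseteq> set (cols A) \<and> lin_indpt T)"
    using maximal_exists[of "(\<lambda>T. T \<subseteq> set (cols A) \<and> lin_indpt T)" "card (set (cols A))" "{}"]
    by (meson List.finite_set card_mono empty_iff empty_subsetI finite_lin_indpt2 rev_finite_subset)
  then have "card S \<le> card (set (cols A))" by (simp add: card_mono maximal_def)
  then have "card S < nc"
    using A cols_length card_length \<open>\<not> distinct (cols A)\<close> card_distinct carrier_matD(2) nat_less_le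
    by (metis dual_order.antisym dual_order.trans)
  then show ?thesis using rank_card_indpt[OF A S] by simp
qed

lemma (in vec_space) full_col_rank_imp_kernel_trivial:
  assumes A: "A \<in> carrier_mat n nc" and r: "rank A = nc"
    and v: "v \<in> carrier_vec nc" and Av: "A *\<^sub>v v = 0\<^sub>v n"
  shows "v = 0\<^sub>v nc"
proof (rule ccontr)
  assume v0: "v \<noteq> 0\<^sub>v nc"
  have "distinct (cols A)" using non_distinct_cols_low_rank[OF A] r by fastforce
  thus False using full_rank_lin_indpt[OF A r] lin_depI[OF A v v0 Av] by simp
qed

lemma gram_mat_inverse:
  fixes X :: "real mat"
  assumes X: "X \<in> carrier_mat n k"
    and inj: "\<And>v. v \<in> carrier_vec k \<Longrightarrow> X *\<^sub>v v = 0\<^sub>v n \<Longrightarrow> v = 0\<^sub>v k"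
  obtains G where "mat_inverse (transpose_mat X * X) = Some G" "G \<in> carrier_mat k k"
    "G * (transpose_mat X * X) = 1\<^sub>m k" "transpose_mat G = G"
proof -
  define H where "H = transpose_mat X * X"
  have H: "H \<in> carrier_mat k k" using X by (simp add: H_def)
  have "det H \<noteq> 0"
  proof
    assume "det H = 0"
    then obtain v where v: "v \<in> carrier_vec k" "v \<noteq> 0\<^sub>v k" "H *\<^sub>v v = 0\<^sub>v k"
      using det_0_iff_vec_prod_zero[OF H] by blast
    have Xv: "X *\<^sub>v v \<in> carrier_vec n" using X v by simp
    have "(X *\<^sub>v v) \<bullet> (X *\<^sub>v v) = (transpose_mat X *\<^sub>v (X *\<^sub>v v)) \<bullet> v"
      using transpose_vec_mult_scalar[OF X v(1) Xv] by simp
    also have "transpose_mat X *\<^sub>v (X *\<^sub>v v) = H *\<^sub>v v" unfolding H_def using X v(1) by simp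
    finally have "(X *\<^sub>v v) \<bullet> (X *\<^sub>v v) = 0" using v(1,3) by simp
    hence "X *\<^sub>v v = 0\<^sub>v n" using conjugate_square_eq_0_vec[OF Xv] by simp
    thus False using inj v by blast
  qed
  hence unit: "H \<in> Units (ring_mat TYPE(real) k ())" by (rule det_non_zero_imp_unit[OF H])
  have "mat_inverse H \<noteq> None"
  proof
    assume N: "mat_inverse H = None"
    show False using mat_inverse(1)[OF H N, where b = "()"] unit by blast
  qed
  then obtain G where G: "mat_inverse H = Some G" by blast
  from mat_inverse(2)[OF H G] have inv: "H * G = 1\<^sub>m k" "G * H = 1\<^sub>m k" "G \<in> carrier_mat k k" by auto
  have "transpose_mat H = H" unfolding H_def using X by (simp add: transpose_mult)
  hence GH: "transpose_mat G * H = 1\<^sub>m k"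
    using transpose_mult[OF H inv(3)] inv(1) by simp
  have "transpose_mat G = transpose_mat G * (H * G)" using inv by simp
  also have "\<dots> = (transpose_mat G * H) * G" using inv H by (simp add: assoc_mult_mat)
  also have "\<dots> = G" using GH inv(3) by simp
  finally have "transpose_mat G = G" .
  with that G inv show ?thesis unfolding H_def by blast
qed

lemma projection_mat_props:
  fixes X :: "real mat"
  assumes X: "X \<in> carrier_mat n k"
    and inj: "\<And>v. v \<in> carrier_vec k \<Longrightarrow> X *\<^sub>v v = 0\<^sub>v n \<Longrightarrow> v = 0\<^sub>v k"
  defines "P \<equiv> X * the (mat_inverse (transpose_mat X * X)) * transpose_mat X"
  shows "P \<in> carrier_mat n n" "transpose_mat P = P" "P * X = X" "mtrace P = real k"
proof -
  obtain G where G: "mat_inverse (transpose_mat X * X) = Some G" "G \<in> carrier_mat k k"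
     "G * (transpose_mat X * X) = 1\<^sub>m k" "transpose_mat G = G"
    using gram_mat_inverse[OF X inj] by blast
  have XT: "transpose_mat X \<in> carrier_mat k n" using X by simp
  have GXT: "G * transpose_mat X \<in> carrier_mat k n" using G(2) XT by simp
  have P: "P = X * (G * transpose_mat X)"
    unfolding P_def G(1) option.sel by (rule assoc_mult_mat[OF X G(2) XT])
  show "P \<in> carrier_mat n n" unfolding P using X GXT by simp
  have GX: "(G * transpose_mat X) * X = 1\<^sub>m k"
    unfolding assoc_mult_mat[OF G(2) XT X] by (rule G(3))
  have "transpose_mat P = transpose_mat (G * transpose_mat X) * transpose_mat X"
    unfolding P by (rule transpose_mult[OF X GXT])
  also have "transpose_mat (G * transpose_mat X) = X * G"
    unfolding transpose_mult[OF G(2) XT] G(4) transpose_transpose ..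
  also have "X * G * transpose_mat X = P"
    unfolding P by (rule assoc_mult_mat[OF X G(2) XT])
  finally show "transpose_mat P = P" .
  have "P * X = X * ((G * transpose_mat X) * X)"
    unfolding P by (rule assoc_mult_mat[OF X GXT X])
  also have "\<dots> = X" unfolding GX using X by (rule right_mult_one_mat)
  finally show "P * X = X" .
  have "mtrace P = mtrace ((G * transpose_mat X) * X)"
    unfolding P by (rule mtrace_mult_comm[OF X GXT])
  also have "\<dots> = real k" unfolding GX by (simp add: mtrace_def)
  finally show "mtrace P = real k" .
qed

lemma first_cols_carrier [simp]: "first_cols X k \<in> carrier_mat (dim_row X) k"
  by (simp add: first_cols_def)

lemma first_cols_eq_mult_selection:
  assumes "a \<le> b"
  shows "first_cols X a = first_cols X b * mat b a (\<lambda>(i, j). if i = j then 1 else 0)"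
proof (rule eq_matI)
  fix i j assume "i < dim_row (first_cols X b * mat b a (\<lambda>(i, j). if i = j then 1 else 0))"
    "j < dim_col (first_cols X b * mat b a (\<lambda>(i, j). if i = j then 1 else 0))"
  hence ij: "i < dim_row X" "j < a" by (auto simp: first_cols_def)
  have "(first_cols X b * mat b a (\<lambda>(i, j). if i = j then 1 else 0)) $$ (i, j)
      = (\<Sum>l<b. X $$ (i, l) * (if l = j then 1 else 0))"
    using ij assms by (simp add: first_cols_def scalar_prod_def atLeast0LessThan)
  also have "\<dots> = X $$ (i, j)" using ij assms by (simp add: if_distrib cong: if_cong)
  finally show "first_cols X a $$ (i, j) = (first_cols X b * mat b a (\<lambda>(i, j). if i = j then 1 else 0)) $$ (i, j)"
    using ij by (simp add: first_cols_def)
qed (auto simp: first_cols_def)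

lemma strict_increments_imp_add_le:
  fixes f :: "nat \<Rightarrow> nat"
  assumes inc: "\<And>m. m < q \<Longrightarrow> f m < f (Suc m)"
  shows "k \<le> m \<Longrightarrow> m \<le> q \<Longrightarrow> f k + (m - k) \<le> f m"
proof (induction m)
  case (Suc m)
  thus ?case using inc[of m] by (cases "k = Suc m") auto
qed simp

lemma hat_props:
  fixes X :: "real mat"
  assumes X: "X \<in> carrier_mat n p" and m: "1 \<le> m"
    and rk: "vec_space.rank n (first_cols X (\<nu> m)) = \<nu> m"
  shows "hat X \<nu> m \<in> carrier_mat n n" "transpose_mat (hat X \<nu> m) = hat X \<nu> m"
    "hat X \<nu> m * first_cols X (\<nu> m) = first_cols X (\<nu> m)" "mtrace (hat X \<nu> m) = real (\<nu> m)"
proof -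
  let ?Xm = "first_cols X (\<nu> m)"
  have Xm: "?Xm \<in> carrier_mat n (\<nu> m)" using X first_cols_carrier[of X] by simp
  have "hat X \<nu> m = ?Xm * the (mat_inverse (transpose_mat ?Xm * ?Xm)) * transpose_mat ?Xm"
    using m by (simp add: hat_def Let_def)
  with projection_mat_props[OF Xm vec_space.full_col_rank_imp_kernel_trivial[OF Xm rk]]
  show "hat X \<nu> m \<in> carrier_mat n n" "transpose_mat (hat X \<nu> m) = hat X \<nu> m"
    "hat X \<nu> m * ?Xm = ?Xm" "mtrace (hat X \<nu> m) = real (\<nu> m)"
    by simp_all
qed

lemma hat_nested:
  fixes X :: "real mat"
  assumes X: "X \<in> carrier_mat n p" and km: "k \<le> m" and k: "1 \<le> k" and \<nu>: "\<nu> k \<le> \<nu> m"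
    and rk_k: "vec_space.rank n (first_cols X (\<nu> k)) = \<nu> k"
    and rk_m: "vec_space.rank n (first_cols X (\<nu> m)) = \<nu> m"
  shows "hat X \<nu> m * hat X \<nu> k = hat X \<nu> k"
proof -
  let ?Xk = "first_cols X (\<nu> k)" and ?Xm = "first_cols X (\<nu> m)"
  let ?E = "mat (\<nu> m) (\<nu> k) (\<lambda>(i, j). if i = j then 1 else (0::real))"
  define G where "G = the (mat_inverse (transpose_mat ?Xk * ?Xk))"
  have Xm: "?Xm \<in> carrier_mat n (\<nu> m)" and Xk: "?Xk \<in> carrier_mat n (\<nu> k)"
    using X first_cols_carrier[of X] by simp_all
  have Pm: "hat X \<nu> m \<in> carrier_mat n n" "hat X \<nu> m * ?Xm = ?Xm"
    using hat_props[where \<nu> = \<nu> and m = m, OF X _ rk_m] k km by auto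
  have E: "?E \<in> carrier_mat (\<nu> m) (\<nu> k)" by simp
  have "hat X \<nu> m * ?Xk = hat X \<nu> m * ?Xm * ?E"
    unfolding first_cols_eq_mult_selection[OF \<nu>] by (rule assoc_mult_mat[OF Pm(1) Xm E, symmetric])
  hence PXk: "hat X \<nu> m * ?Xk = ?Xk"
    unfolding Pm(2) first_cols_eq_mult_selection[OF \<nu>, symmetric] .
  obtain G' where "mat_inverse (transpose_mat ?Xk * ?Xk) = Some G'" "G' \<in> carrier_mat (\<nu> k) (\<nu> k)"
    using gram_mat_inverse[OF Xk vec_space.full_col_rank_imp_kernel_trivial[OF Xk rk_k]] by auto
  hence G: "G \<in> carrier_mat (\<nu> k) (\<nu> k)" by (simp add: G_def)
  have XkT: "transpose_mat ?Xk \<in> carrier_mat (\<nu> k) n" using Xk by simp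
  have hk: "hat X \<nu> k = ?Xk * (G * transpose_mat ?Xk)"
    using k assoc_mult_mat[OF Xk G XkT] by (simp add: hat_def Let_def G_def[symmetric])
  show ?thesis
    unfolding hk using assoc_mult_mat[OF Pm(1) Xk mult_carrier_mat[OF G XkT], symmetric] PXk by simp
qed

section \<open>Risks of nested projections\<close>

lemma sqnorm_nonneg: "0 \<le> sqnorm (v :: real vec)"
  by (simp add: sqnorm_def scalar_prod_self_nonneg)

text \<open>Pythagoras: if \<open>P A = A\<close> then \<open>A \<mu> - P \<mu>\<close> lies in the range of \<open>P\<close>, which is
  orthogonal to the residual \<open>P \<mu> - \<mu>\<close>.\<close>
lemma sqnorm_proj_residual_le:
  fixes P A :: "real mat"
  assumes P: "P \<in> carrier_mat n n" "transpose_mat P = P" "P * P = P"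
    and A: "A \<in> carrier_mat n n" "P * A = A" and \<mu>: "\<mu> \<in> carrier_vec n"
  shows "sqnorm (P *\<^sub>v \<mu> - \<mu>) \<le> sqnorm (A *\<^sub>v \<mu> - \<mu>)"
proof -
  define u where "u = A *\<^sub>v \<mu> - P *\<^sub>v \<mu>"
  define v where "v = P *\<^sub>v \<mu> - \<mu>"
  have uc: "u \<in> carrier_vec n" and vc: "v \<in> carrier_vec n"
    using A P \<mu> by (auto simp: u_def v_def)
  have "P *\<^sub>v u = P *\<^sub>v (A *\<^sub>v \<mu>) - P *\<^sub>v (P *\<^sub>v \<mu>)"
    unfolding u_def by (rule mult_minus_distrib_mat_vec) (use A P \<mu> in auto)
  also have "\<dots> = u"
    unfolding u_def using A P \<mu> by (simp add: assoc_mult_mat_vec[symmetric])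
  finally have Pu: "P *\<^sub>v u = u" .
  have "P *\<^sub>v v = P *\<^sub>v (P *\<^sub>v \<mu>) - P *\<^sub>v \<mu>"
    unfolding v_def by (rule mult_minus_distrib_mat_vec) (use P \<mu> in auto)
  also have "\<dots> = 0\<^sub>v n"
    using P \<mu> by (simp add: assoc_mult_mat_vec[symmetric])
  finally have Pv: "P *\<^sub>v v = 0\<^sub>v n" .
  have "u \<bullet> v = (transpose_mat P *\<^sub>v u) \<bullet> v" using Pu P(2) by simp
  also have "\<dots> = u \<bullet> (P *\<^sub>v v)" by (rule transpose_vec_mult_scalar[OF P(1) vc uc])
  finally have uv: "u \<bullet> v = 0" using Pv uc by simp
  have "A *\<^sub>v \<mu> - \<mu> = u + v"
    unfolding u_def v_def using A P \<mu> by (intro eq_vecI) auto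
  hence "sqnorm (A *\<^sub>v \<mu> - \<mu>) = u \<bullet> u + 2 * (u \<bullet> v) + v \<bullet> v"
    using uc vc by (simp add: sqnorm_def add_scalar_prod_distrib scalar_prod_add_distrib comm_scalar_prod[of v n u])
  thus ?thesis
    using uv sqnorm_nonneg[of u] by (simp add: sqnorm_def v_def)
qed

lemma mult_weighted_mat_sum:
  fixes A :: "real mat" and P :: "nat \<Rightarrow> real mat"
  assumes A: "A \<in> carrier_mat n n" and P: "\<And>m. m \<in> I \<Longrightarrow> P m \<in> carrier_mat n n"
    and AP: "\<And>m. m \<in> I \<Longrightarrow> A * P m = P m"
  shows "A * mat n n (\<lambda>(i, j). \<Sum>m\<in>I. w m * P m $$ (i, j)) = mat n n (\<lambda>(i, j). \<Sum>m\<in>I. w m * P m $$ (i, j))"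
proof (rule eq_matI)
  fix i j assume "i < dim_row (mat n n (\<lambda>(i, j). \<Sum>m\<in>I. w m * P m $$ (i, j)))"
    "j < dim_col (mat n n (\<lambda>(i, j). \<Sum>m\<in>I. w m * P m $$ (i, j)))"
  hence ij: "i < n" "j < n" by auto
  have "(A * mat n n (\<lambda>(i, j). \<Sum>m\<in>I. w m * P m $$ (i, j))) $$ (i, j)
      = (\<Sum>l<n. \<Sum>m\<in>I. w m * (A $$ (i, l) * P m $$ (l, j)))"
    using A ij by (simp add: scalar_prod_def atLeast0LessThan sum_distrib_left ac_simps)
  also have "\<dots> = (\<Sum>m\<in>I. \<Sum>l<n. w m * (A $$ (i, l) * P m $$ (l, j)))"
    by (rule sum.swap)
  also have "\<dots> = (\<Sum>m\<in>I. w m * (A * P m) $$ (i, j))"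
  proof (rule sum.cong[OF refl])
    fix m assume "m \<in> I"
    hence "P m \<in> carrier_mat n n" by (rule P)
    thus "(\<Sum>l<n. w m * (A $$ (i, l) * P m $$ (l, j))) = w m * (A * P m) $$ (i, j)"
      using A ij by (simp add: scalar_prod_def atLeast0LessThan sum_distrib_left)
  qed
  also have "\<dots> = (\<Sum>m\<in>I. w m * P m $$ (i, j))" by (simp add: AP)
  finally show "(A * mat n n (\<lambda>(i, j). \<Sum>m\<in>I. w m * P m $$ (i, j))) $$ (i, j)
      = mat n n (\<lambda>(i, j). \<Sum>m\<in>I. w m * P m $$ (i, j)) $$ (i, j)" using ij by simp
qed (use A in auto)

lemma weighted_mat_sum_indicator:
  fixes P :: "nat \<Rightarrow> real mat"
  assumes "m \<in> I" "finite I" "P m \<in> carrier_mat n n"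
  shows "mat n n (\<lambda>(i, j). \<Sum>k\<in>I. (if k = m then 1 else 0) * P k $$ (i, j)) = P m"
proof (rule eq_matI)
  fix i j assume "i < dim_row (P m)" "j < dim_col (P m)"
  hence ij: "i < n" "j < n" using assms(3) by auto
  have "(\<Sum>k\<in>I. (if k = m then 1 else 0) * P k $$ (i, j)) = (\<Sum>k\<in>I. if k = m then P m $$ (i, j) else 0)"
    by (rule sum.cong) auto
  thus "mat n n (\<lambda>(i, j). \<Sum>k\<in>I. (if k = m then 1 else 0) * P k $$ (i, j)) $$ (i, j) = P m $$ (i, j)"
    using assms ij by simp
qed (use assms in auto)

locale nested_projections =
  fixes n q :: nat and P :: "nat \<Rightarrow> real mat" and \<nu> :: "nat \<Rightarrow> nat"
    and \<Omega> :: "real mat" and c1 c2 :: real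
  assumes P_carrier: "\<And>m. m \<le> q \<Longrightarrow> P m \<in> carrier_mat n n"
    and P_symmetric: "\<And>m. m \<le> q \<Longrightarrow> transpose_mat (P m) = P m"
    and P_trace: "\<And>m. m \<le> q \<Longrightarrow> mtrace (P m) = real (\<nu> m)"
    and P_nested: "\<And>k m. k \<le> m \<Longrightarrow> m \<le> q \<Longrightarrow> P m * P k = P k"
    and \<nu>_increasing: "\<And>m. m < q \<Longrightarrow> \<nu> m < \<nu> (Suc m)"
    and \<Omega>_carrier: "\<Omega> \<in> carrier_mat n n"
    and c1_pos: "0 < c1"
    and \<Omega>_ge: "\<And>x. x \<in> carrier_vec n \<Longrightarrow> c1 * (x \<bullet> x) \<le> x \<bullet> (\<Omega> *\<^sub>v x)"
    and \<Omega>_le: "\<And>x. x \<in> carrier_vec n \<Longrightarrow> x \<bullet> (\<Omega> *\<^sub>v x) \<le> c2 * (x \<bullet> x)"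
begin

definition variance :: "real mat \<Rightarrow> real" where
  "variance A = mtrace (A * \<Omega> * transpose_mat A)"

lemma lin_risk_eq: "lin_risk A \<mu> \<Omega> = sqnorm (A *\<^sub>v \<mu> - \<mu>) + variance A"
  by (simp add: lin_risk_def variance_def)

lemma variance_nonneg:
  assumes A: "A \<in> carrier_mat n n"
  shows "0 \<le> variance A"
proof -
  have "0 \<le> mtrace (A * transpose_mat A)"
    unfolding mtrace_mult_transpose_eq_sum_rows[OF A] by (intro sum_nonneg scalar_prod_self_nonneg)
  hence "0 \<le> c1 * mtrace (A * transpose_mat A)" using c1_pos by simp
  also have "\<dots> \<le> variance A"
    unfolding variance_def by (rule mtrace_sandwich_ge[OF A \<Omega>_carrier \<Omega>_ge])
  finally show ?thesis .
qed

lemma P_idem: "m \<le> q \<Longrightarrow> P m * P m = P m"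
  by (rule P_nested) simp_all

lemma increment_sym_idem:
  assumes "k \<le> m" "m \<le> q"
  shows "P m - P k \<in> carrier_mat n n" "transpose_mat (P m - P k) = P m - P k"
    "(P m - P k) * (P m - P k) = P m - P k"
proof -
  note c = P_carrier[of m] P_carrier[of k]
  have Pkm: "P k * P m = P k"
    using transpose_mult[OF c] P_nested[OF assms] P_symmetric[of m] P_symmetric[of k] assms
    by (metis le_trans)
  show "P m - P k \<in> carrier_mat n n" using c assms by (simp add: minus_carrier_mat)
  show "transpose_mat (P m - P k) = P m - P k"
    using transpose_minus[OF c] P_symmetric[of m] P_symmetric[of k] assms by simp
  have "(P m - P k) * (P m - P k) = P m * (P m - P k) - P k * (P m - P k)"
    by (rule minus_mult_distrib_mat) (use c assms in auto)
  also have "P m * (P m - P k) = P m * P m - P m * P k"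
    by (rule mult_minus_distrib_mat) (use c assms in auto)
  also have "P k * (P m - P k) = P k * P m - P k * P k"
    by (rule mult_minus_distrib_mat) (use c assms in auto)
  finally show "(P m - P k) * (P m - P k) = P m - P k"
    using c assms P_nested[OF assms] Pkm P_idem[of m] P_idem[of k] by (intro eq_matI) auto
qed

lemma variance_sym_idem:
  assumes S: "S \<in> carrier_mat n n" "transpose_mat S = S" "S * S = S"
  shows "variance S = mtrace (S * \<Omega>)"
proof -
  have "variance S = mtrace (S * \<Omega> * S)" unfolding variance_def S(2) ..
  also have "\<dots> = mtrace (S * (S * \<Omega>))" by (rule mtrace_mult_comm) (use S \<Omega>_carrier in auto)
  also have "S * (S * \<Omega>) = S * \<Omega>" using assoc_mult_mat[OF S(1) S(1) \<Omega>_carrier] S(3) by simp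
  finally show ?thesis .
qed

lemma variance_increment:
  assumes km: "k \<le> m" and mq: "m \<le> q"
  shows "variance (P m) - variance (P k) = mtrace ((P m - P k) * \<Omega>)"
    "c1 * (real (\<nu> m) - real (\<nu> k)) \<le> variance (P m) - variance (P k)"
proof -
  have kq: "k \<le> q" using km mq by simp
  note D = increment_sym_idem[OF km mq]
  have "(P m - P k) * \<Omega> = P m * \<Omega> - P k * \<Omega>"
    using P_carrier[OF mq] P_carrier[OF kq] \<Omega>_carrier by (rule minus_mult_distrib_mat)
  hence "mtrace ((P m - P k) * \<Omega>) = mtrace (P m * \<Omega>) - mtrace (P k * \<Omega>)"
    using mtrace_minus[OF mult_carrier_mat[OF P_carrier[OF mq] \<Omega>_carrier]
        mult_carrier_mat[OF P_carrier[OF kq] \<Omega>_carrier]] by simp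
  also have "\<dots> = variance (P m) - variance (P k)"
    using variance_sym_idem P_carrier P_symmetric P_idem mq kq by simp
  finally show incr: "variance (P m) - variance (P k) = mtrace ((P m - P k) * \<Omega>)" ..
  have "c1 * mtrace ((P m - P k) * transpose_mat (P m - P k)) \<le> variance (P m - P k)"
    unfolding variance_def by (rule mtrace_sandwich_ge[OF D(1) \<Omega>_carrier \<Omega>_ge])
  also have "mtrace ((P m - P k) * transpose_mat (P m - P k)) = real (\<nu> m) - real (\<nu> k)"
    using D P_carrier[OF mq] P_carrier[OF kq] P_trace[OF mq] P_trace[OF kq] by (simp add: mtrace_minus)
  also have "variance (P m - P k) = variance (P m) - variance (P k)"
    using incr variance_sym_idem[OF D] by simp
  finally show "c1 * (real (\<nu> m) - real (\<nu> k)) \<le> variance (P m) - variance (P k)" .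
qed

lemma variance_le: "m \<le> q \<Longrightarrow> variance (P m) \<le> c2 * real (\<nu> m)"
  using mtrace_sandwich_le[OF P_carrier \<Omega>_carrier \<Omega>_le, of m] P_symmetric P_idem P_trace
  by (simp add: variance_def)

lemma \<nu>_add_le:
  assumes "k \<le> m" "m \<le> q"
  shows "\<nu> k + (m - k) \<le> \<nu> m"
  using \<nu>_increasing assms by (rule strict_increments_imp_add_le)

text \<open>The numerator of \<open>\<theta>\<^sub>j\<close> is \<open>|(P\<^sub>j - P\<^sub>j\<^sub>-\<^sub>1) \<mu>|\<^sup>2\<close> and its denominator is positive,
  so \<open>\<theta>\<^sub>j \<le> 0\<close> forces the two fits to agree.\<close>
lemma fit_unchanged_if_theta_nonpos:
  assumes j: "1 \<le> j" "j \<le> q" and \<mu>: "\<mu> \<in> carrier_vec n"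
    and \<theta>: "(\<mu> \<bullet> ((P j - P (j - 1)) *\<^sub>v \<mu>) / real n) / mtrace ((P j - P (j - 1)) * \<Omega>) \<le> 0"
  shows "P j *\<^sub>v \<mu> = P (j - 1) *\<^sub>v \<mu>"
proof -
  define D where "D = P j - P (j - 1)"
  have Pj: "P j \<in> carrier_mat n n" "P (j - 1) \<in> carrier_mat n n" using P_carrier j by auto
  note D = increment_sym_idem[of "j - 1" j, OF _ j(2), folded D_def, simplified]
  have Dc: "D *\<^sub>v \<mu> \<in> carrier_vec n" using D(1) \<mu> by simp
  have "0 < c1 * (real (\<nu> j) - real (\<nu> (j - 1)))"
    using c1_pos \<nu>_increasing[of "j - 1"] j by simp
  hence den: "0 < mtrace (D * \<Omega>)"
    using variance_increment[of "j - 1" j] j unfolding D_def by simp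
  moreover have "0 < n" using den D(1) \<Omega>_carrier by (cases n) (auto simp: mtrace_def)
  ultimately have "0 < real n * mtrace (D * \<Omega>)" by simp
  hence "\<mu> \<bullet> (D *\<^sub>v \<mu>) \<le> 0"
    using \<theta> unfolding D_def[symmetric] by (auto simp: divide_le_0_iff)
  moreover have "\<mu> \<bullet> (D *\<^sub>v \<mu>) = (D *\<^sub>v \<mu>) \<bullet> (D *\<^sub>v \<mu>)"
    using transpose_vec_mult_scalar[OF D(1) Dc \<mu>] assoc_mult_mat_vec[OF D(1) D(1) \<mu>] D(2,3) by simp
  ultimately have "(D *\<^sub>v \<mu>) \<bullet> (D *\<^sub>v \<mu>) = 0"
    using conjugate_square_ge_0_vec[of "D *\<^sub>v \<mu>"] by simp
  hence "D *\<^sub>v \<mu> = 0\<^sub>v n" using conjugate_square_eq_0_vec[OF Dc] by simp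
  moreover have "D *\<^sub>v \<mu> = P j *\<^sub>v \<mu> - P (j - 1) *\<^sub>v \<mu>"
    unfolding D_def by (rule minus_mult_distrib_mat_vec[OF Pj \<mu>])
  ultimately show ?thesis
    using Pj \<mu>
    by (metis carrier_matD(1) dim_mult_mat_vec index_minus_vec(1) index_zero_vec(1) eq_vecI
        right_minus_eq)
qed

lemma lin_risk_increases_beyond_signal:
  assumes \<mu>: "\<mu> \<in> carrier_vec n" and ds: "d < s" and sq: "s \<le> q"
    and no_signal: "\<And>j. d < j \<Longrightarrow> j \<le> q \<Longrightarrow>
      (\<mu> \<bullet> ((P j - P (j - 1)) *\<^sub>v \<mu>) / real n) / mtrace ((P j - P (j - 1)) * \<Omega>) \<le> 0"
  shows "lin_risk (P d) \<mu> \<Omega> < lin_risk (P s) \<mu> \<Omega>"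
proof -
  have fit: "P j *\<^sub>v \<mu> = P d *\<^sub>v \<mu>" if "d \<le> j" "j \<le> s" for j
    using that
  proof (induction j rule: dec_induct)
    case (step j)
    thus ?case
      using fit_unchanged_if_theta_nonpos[of "Suc j", OF _ _ \<mu> no_signal] sq by simp
  qed simp
  have "0 < c1 * (real (\<nu> s) - real (\<nu> d))"
    using c1_pos \<nu>_add_le[of d s] ds sq by simp
  also have "\<dots> \<le> variance (P s) - variance (P d)"
    using variance_increment(2)[of d s] ds sq by simp
  finally show ?thesis
    unfolding lin_risk_eq using fit[of s] ds by simp
qed

text \<open>Beating model \<open>M\<close> forces model \<open>s\<close> to pay at least \<open>c1 (s - M)\<close> in extra variance,
  which the bias of model \<open>M\<close> must make up.\<close>
lemma bias_ge_if_lin_risk_le: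
  assumes \<mu>: "\<mu> \<in> carrier_vec n" and Ms: "M \<le> s" and sq: "s \<le> q"
    and le: "lin_risk (P s) \<mu> \<Omega> \<le> lin_risk (P M) \<mu> \<Omega>"
  shows "c1 * (real s - real M) \<le> sqnorm (P M *\<^sub>v \<mu> - \<mu>)"
proof -
  have "real s - real M \<le> real (\<nu> s) - real (\<nu> M)"
    using \<nu>_add_le[OF Ms sq] Ms by linarith
  hence "c1 * (real s - real M) \<le> c1 * (real (\<nu> s) - real (\<nu> M))"
    using c1_pos by simp
  also have "\<dots> \<le> variance (P s) - variance (P M)"
    using variance_increment(2)[OF Ms sq] .
  also have "\<dots> \<le> sqnorm (P M *\<^sub>v \<mu> - \<mu>)"
    using le sqnorm_nonneg[of "P s *\<^sub>v \<mu> - \<mu>"] unfolding lin_risk_eq by linarith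
  finally show ?thesis .
qed

lemma bias_le_lin_risk_avg:
  assumes \<mu>: "\<mu> \<in> carrier_vec n" and Mq: "M \<le> q"
  shows "sqnorm (P M *\<^sub>v \<mu> - \<mu>) \<le> lin_risk (mat n n (\<lambda>(i, j). \<Sum>m\<in>{1..M}. w m * P m $$ (i, j))) \<mu> \<Omega>"
proof -
  let ?A = "mat n n (\<lambda>(i, j). \<Sum>m\<in>{1..M}. w m * P m $$ (i, j))"
  have A: "?A \<in> carrier_mat n n" by simp
  have "P M * ?A = ?A"
    using Mq by (intro mult_weighted_mat_sum P_carrier P_nested) auto
  hence "sqnorm (P M *\<^sub>v \<mu> - \<mu>) \<le> sqnorm (?A *\<^sub>v \<mu> - \<mu>)"
    using P_carrier P_symmetric P_idem Mq A \<mu> by (intro sqnorm_proj_residual_le) auto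
  thus ?thesis unfolding lin_risk_eq using variance_nonneg[OF A] by linarith
qed

end

section \<open>The risk ratio\<close>

lemma bounded_increments_imp_le:
  fixes f :: "nat \<Rightarrow> nat"
  assumes "f 0 = 0" and mono: "\<And>m. m < k \<Longrightarrow> f m \<le> f (Suc m)"
    and inc: "\<And>m. 1 \<le> m \<Longrightarrow> m \<le> k \<Longrightarrow> real (f m - f (m - 1)) \<le> V"
  shows "real (f k) \<le> V * real k"
proof -
  have "real (f j) \<le> V * real j" if "j \<le> k" for j
    using that
  proof (induction j)
    case (Suc j)
    have "real (f (Suc j)) = real (f j) + real (f (Suc j) - f j)"
      using mono[of j] Suc.prems by simp
    also have "\<dots> \<le> V * real j + V"
      using Suc inc[of "Suc j"] by (intro add_mono) auto
    finally show ?case by (simp add: distrib_left)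
  qed (simp add: assms(1))
  thus ?thesis by simp
qed

lemma dn_le_and_theta_nonpos_above:
  assumes "1 \<le> dn X \<nu> q \<mu> \<Omega>"
  shows "dn X \<nu> q \<mu> \<Omega> \<le> q" "\<And>j. dn X \<nu> q \<mu> \<Omega> < j \<Longrightarrow> j \<le> q \<Longrightarrow> theta X \<nu> \<mu> \<Omega> j \<le> 0"
proof -
  define S where "S = {m\<in>{1..q}. theta X \<nu> \<mu> \<Omega> m > 0}"
  have "S \<noteq> {}" and d: "dn X \<nu> q \<mu> \<Omega> = Max S"
    using assms unfolding dn_def Let_def S_def[symmetric] by (auto split: if_splits)
  moreover have "finite S" by (simp add: S_def)
  ultimately show "dn X \<nu> q \<mu> \<Omega> \<le> q"
    using Max_in[of S] by (auto simp: S_def)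
  show "theta X \<nu> \<mu> \<Omega> j \<le> 0" if "dn X \<nu> q \<mu> \<Omega> < j" "j \<le> q" for j
    using that d Max_ge[OF \<open>finite S\<close>, of j] by (fastforce simp: S_def)
qed

text \<open>\<open>1 - a / b \<le> B x / T\<close> and \<open>T \<ge> c y / 2\<close>.\<close>
lemma ratio_close_to_one:
  fixes T a b B c x y :: real
  assumes c: "0 < c" and B: "0 \<le> B" and Ta: "T \<le> a" and ab: "a \<le> b" and bT: "b \<le> T + B * x"
    and Tl: "c * (y - x) \<le> T" and y: "0 < y" and x: "0 \<le> x" and small: "x / y < 1/2"
  shows "\<bar>a / b - 1\<bar> \<le> (2 * B / c) * (x / y)"
proof -
  have "x < y / 2" using small y by (simp add: divide_less_eq)
  hence "c * (y / 2) \<le> c * (y - x)" using c by simp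
  hence Tp: "c * (y / 2) \<le> T" using Tl by linarith
  have cy: "0 < c * (y / 2)" using c y by simp
  hence Tpos: "0 < T" using Tp by linarith
  have bp: "0 < b" using Tpos Ta ab by linarith
  have "1 - a / b = (b - a) / b" using bp by (simp add: field_simps)
  also have "\<dots> \<le> (B * x) / b" using bT Ta bp by (intro divide_right_mono) auto
  also have "\<dots> \<le> (B * x) / T" using B x Tpos Ta ab by (intro divide_left_mono) auto
  also have "\<dots> \<le> (B * x) / (c * (y / 2))"
    using B x Tp Tpos cy by (intro divide_left_mono) auto
  also have "\<dots> = (2 * B / c) * (x / y)" using c y by (simp add: field_simps)
  finally show ?thesis using ab bp by simp
qed

lemma nested_projections_hat:
  fixes X \<Omega> :: "real mat"
  assumes X: "X \<in> carrier_mat n p" and \<nu>: "\<nu> 0 = 0" "\<And>m. m < q \<Longrightarrow> \<nu> m < \<nu> (Suc m)"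
    and rank: "\<And>m. 1 \<le> m \<Longrightarrow> m \<le> q \<Longrightarrow> vec_space.rank n (first_cols X (\<nu> m)) = \<nu> m"
    and \<Omega>: "\<Omega> \<in> carrier_mat n n" and c1: "0 < c1"
    and ge: "\<And>x. x \<in> carrier_vec n \<Longrightarrow> c1 * (x \<bullet> x) \<le> x \<bullet> (\<Omega> *\<^sub>v x)"
    and le: "\<And>x. x \<in> carrier_vec n \<Longrightarrow> x \<bullet> (\<Omega> *\<^sub>v x) \<le> c2 * (x \<bullet> x)"
  shows "nested_projections n q (hat X \<nu>) \<nu> \<Omega> c1 c2"
proof
  have hat0: "hat X \<nu> 0 = 0\<^sub>m n n" using X by (simp add: hat_def)
  have props: "hat X \<nu> m \<in> carrier_mat n n \<and> transpose_mat (hat X \<nu> m) = hat X \<nu> m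
      \<and> mtrace (hat X \<nu> m) = real (\<nu> m)" if "m \<le> q" for m
  proof (cases "m = 0")
    case True
    thus ?thesis using hat0 \<nu>(1) by (simp add: mtrace_def)
  next
    case False
    thus ?thesis using hat_props[where \<nu> = \<nu> and m = m, OF X _ rank] that by simp
  qed
  show "\<And>m. m \<le> q \<Longrightarrow> hat X \<nu> m \<in> carrier_mat n n"
    and "\<And>m. m \<le> q \<Longrightarrow> transpose_mat (hat X \<nu> m) = hat X \<nu> m"
    and "\<And>m. m \<le> q \<Longrightarrow> mtrace (hat X \<nu> m) = real (\<nu> m)"
    using props by blast+
  show "hat X \<nu> m * hat X \<nu> k = hat X \<nu> k" if km: "k \<le> m" and mq: "m \<le> q" for k m
  proof (cases "k = 0")
    case True
    thus ?thesis using hat0 props[OF mq] right_mult_zero_mat[of "hat X \<nu> m" n n n] by simp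
  next
    case False
    have "\<nu> k + (m - k) \<le> \<nu> m" using \<nu>(2) km mq by (rule strict_increments_imp_add_le)
    thus ?thesis using hat_nested[OF X km _ _ rank rank] False km mq by simp
  qed
qed (use \<nu> \<Omega> c1 ge le in auto)

lemma risk_weight_min_le_risk_model:
  fixes X :: "real mat"
  assumes X: "X \<in> carrier_mat n p" and m: "m \<in> {1..M}" and P: "hat X \<nu> m \<in> carrier_mat n n"
    and wstar: "\<forall>w\<in>weight_set M. risk_weight X \<nu> M \<mu> \<Omega> wstar \<le> risk_weight X \<nu> M \<mu> \<Omega> w"
  shows "risk_weight X \<nu> M \<mu> \<Omega> wstar \<le> risk_model X \<nu> \<mu> \<Omega> m"
proof -
  let ?e = "\<lambda>k. if k = m then 1 else 0 :: real"
  have "?e \<in> weight_set M" using m by (auto simp: weight_set_def)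
  hence "risk_weight X \<nu> M \<mu> \<Omega> wstar \<le> risk_weight X \<nu> M \<mu> \<Omega> ?e" using wstar by blast
  also have "risk_weight X \<nu> M \<mu> \<Omega> ?e = risk_model X \<nu> \<mu> \<Omega> m"
    using X m P by (simp add: risk_weight_def avg_hat_def risk_model_def weighted_mat_sum_indicator)
  finally show ?thesis .
qed

lemma risk_ratio_bound:
  fixes X \<Omega> :: "real mat" and \<mu> :: "real vec" and \<nu> :: "nat \<Rightarrow> nat" and M q :: nat
    and wstar :: "nat \<Rightarrow> real"
  defines "R \<equiv> risk_model X \<nu> \<mu> \<Omega>" and "Rw \<equiv> risk_weight X \<nu> M \<mu> \<Omega>" and "d \<equiv> dn X \<nu> q \<mu> \<Omega>"
  assumes X: "X \<in> carrier_mat n p" and \<mu>: "\<mu> \<in> carrier_vec n"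
    and \<Omega>: "\<Omega> \<in> carrier_mat n n" "transpose_mat \<Omega> = \<Omega>"
    and \<nu>: "\<nu> 0 = 0" "\<forall>m<q. \<nu> m < \<nu> (Suc m)"
    and rank: "\<forall>m\<in>{1..q}. vec_space.rank n (first_cols X (\<nu> m)) = \<nu> m"
    and M: "1 \<le> M" "M \<le> q"
    and mstar: "mstar \<in> {1..M}" "\<forall>m\<in>{1..M}. R mstar \<le> R m"
    and s: "s \<in> {1..q}" "\<forall>m\<in>{1..q}. R s \<le> R m"
    and wstar: "\<forall>w\<in>weight_set M. Rw wstar \<le> Rw w"
    and c: "0 < c1" "c1 \<le> c2" "\<forall>k. eigenvalue \<Omega> k \<longrightarrow> c1 < k \<and> k < c2"
    and V: "\<forall>m\<in>{1..d}. real (\<nu> m - \<nu> (m - 1)) \<le> V" and d: "1 \<le> d"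
    and small: "real M / real s < 1/2"
  shows "\<bar>Rw wstar / R mstar - 1\<bar> \<le> (2 * (c2 * V) / c1) * (real M / real s)"
proof -
  interpret nested_projections n q "hat X \<nu>" \<nu> \<Omega> c1 c2
    using X \<nu> rank \<Omega> c
    by (intro nested_projections_hat quad_form_ge_of_eigenvalues_gt quad_form_le_of_eigenvalues_lt) auto
  have R: "R m = lin_risk (hat X \<nu> m) \<mu> \<Omega>" for m
    by (simp add: R_def risk_model_def)
  have Rw: "Rw w = lin_risk (mat n n (\<lambda>(i, j). \<Sum>m\<in>{1..M}. w m * hat X \<nu> m $$ (i, j))) \<mu> \<Omega>" for w
    using X by (simp add: Rw_def risk_weight_def avg_hat_def)
  have dq: "d \<le> q" using dn_le_and_theta_nonpos_above(1) d unfolding d_def .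
  have no_signal: "(\<mu> \<bullet> ((hat X \<nu> j - hat X \<nu> (j - 1)) *\<^sub>v \<mu>) / real n)
      / mtrace ((hat X \<nu> j - hat X \<nu> (j - 1)) * \<Omega>) \<le> 0" if "d < j" "j \<le> q" for j
    using dn_le_and_theta_nonpos_above(2)[of X \<nu> q \<mu> \<Omega> j] d that X by (simp add: d_def theta_def)
  have "s \<le> d"
  proof (rule ccontr)
    assume "\<not> s \<le> d"
    hence "R d < R s" unfolding R using lin_risk_increases_beyond_signal[OF \<mu> _ _ no_signal] s by simp
    moreover have "R s \<le> R d" using s d dq by simp
    ultimately show False by simp
  qed
  have "real M < real s / 2" using small s by (simp add: divide_less_eq)
  hence Ms: "M < s" by linarith
  define T where "T = sqnorm (hat X \<nu> M *\<^sub>v \<mu> - \<mu>)"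
  have T_lower: "c1 * (real s - real M) \<le> T"
    unfolding T_def using Ms s M by (intro bias_ge_if_lin_risk_le[OF \<mu>]) (auto simp: R[symmetric])
  have "real (\<nu> 1 - \<nu> (1 - 1)) \<le> V" using V d by (intro bspec[OF V]) simp
  hence V0: "0 \<le> V" using of_nat_0_le_iff[of "\<nu> 1 - \<nu> 0"] by linarith
  have "\<nu> m \<le> \<nu> (Suc m)" if "m < M" for m
    using \<nu>(2) order_less_le_trans[OF that M(2)] by (simp add: less_imp_le)
  hence "real (\<nu> M) \<le> V * real M"
    by (intro bounded_increments_imp_le) (use \<nu> V Ms \<open>s \<le> d\<close> in auto)
  hence "R M \<le> T + c2 * V * real M"
    unfolding R lin_risk_eq T_def using variance_le[OF M(2)] c by (smt (verit) mult_left_mono mult.assoc)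
  moreover have "T \<le> Rw wstar" unfolding Rw T_def by (rule bias_le_lin_risk_avg[OF \<mu> M(2)])
  moreover have "Rw wstar \<le> R mstar"
    unfolding Rw_def R_def using X mstar M wstar P_carrier
    by (intro risk_weight_min_le_risk_model[where p = p]) (auto simp: Rw_def)
  moreover have "R mstar \<le> R M" using mstar M by simp
  ultimately show ?thesis
    using T_lower s c V0 small by (intro ratio_close_to_one) (auto simp: mult.assoc)
qed

theorem theorem3:
  fixes X :: "nat \<Rightarrow> real mat" and \<beta> \<mu> :: "nat \<Rightarrow> real vec" and \<Omega> :: "nat \<Rightarrow> real mat"
    and p q M :: "nat \<Rightarrow> nat" and \<nu> :: "nat \<Rightarrow> nat \<Rightarrow> nat"
    and mstar mstar2 :: "nat \<Rightarrow> nat" and wstar :: "nat \<Rightarrow> nat \<Rightarrow> real"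
  defines "R \<equiv> \<lambda>n m. risk_model (X n) (\<nu> n) (\<mu> n) (\<Omega> n) m"
    and "Rw \<equiv> \<lambda>n w. risk_weight (X n) (\<nu> n) (M n) (\<mu> n) (\<Omega> n) w"
    and "\<theta> \<equiv> \<lambda>n m. theta (X n) (\<nu> n) (\<mu> n) (\<Omega> n) m"
    and "d \<equiv> \<lambda>n. dn (X n) (\<nu> n) (q n) (\<mu> n) (\<Omega> n)"
  assumes design: "\<forall>\<^sub>F n in sequentially. X n \<in> carrier_mat n (p n) \<and> p n < n
                    \<and> \<beta> n \<in> carrier_vec (p n) \<and> \<mu> n = X n *\<^sub>v \<beta> n"
    and cov: "\<forall>\<^sub>F n in sequentially. \<Omega> n \<in> carrier_mat n n \<and> transpose_mat (\<Omega> n) = \<Omega> n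
                    \<and> (\<forall>x\<in>carrier_vec n. x \<noteq> 0\<^sub>v n \<longrightarrow> x \<bullet> (\<Omega> n *\<^sub>v x) > 0)"
    and nested: "\<forall>\<^sub>F n in sequentially. \<nu> n 0 = 0 \<and> (\<forall>m<q n. \<nu> n m < \<nu> n (Suc m))
                    \<and> \<nu> n (q n) = p n"
    and full_rank: "\<forall>\<^sub>F n in sequentially. \<forall>m\<in>{1..q n}.
                    vec_space.rank n (first_cols (X n) (\<nu> n m)) = \<nu> n m"
    and Mbounds: "\<forall>\<^sub>F n in sequentially. 2 \<le> M n \<and> M n \<le> q n"
    and mstar_min: "\<forall>\<^sub>F n in sequentially. mstar n \<in> {1..M n}
                    \<and> (\<forall>m\<in>{1..M n}. m \<noteq> mstar n \<longrightarrow> R n (mstar n) < R n m)"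
    and mstar2_min: "\<forall>\<^sub>F n in sequentially. mstar2 n \<in> {1..q n}
                    \<and> (\<forall>m\<in>{1..q n}. m \<noteq> mstar2 n \<longrightarrow> R n (mstar2 n) < R n m)"
    and wstar_min: "\<forall>\<^sub>F n in sequentially. wstar n \<in> weight_set (M n)
                    \<and> (\<forall>w\<in>weight_set (M n). w \<noteq> wstar n \<longrightarrow> Rw n (wstar n) < Rw n w)"
    and A1: "\<exists>C. \<forall>\<^sub>F n in sequentially. sqnorm (\<mu> n) / real n \<le> C"
    and A2: "\<exists>c1 c2. 0 < c1 \<and> c1 \<le> c2 \<and> (\<forall>\<^sub>F n in sequentially.
                    \<forall>k. eigenvalue (\<Omega> n) k \<longrightarrow> c1 < k \<and> k < c2)"
    and A3: "\<forall>\<^sub>F n in sequentially. \<forall>m\<in>{1..q n}. \<forall>m'\<in>{1..q n}. m \<le> m' \<longrightarrow> \<theta> n m' \<le> \<theta> n m"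
    and A4: "\<exists>V::real. 1 \<le> V \<and> (\<forall>\<^sub>F n in sequentially. \<forall>m\<in>{1..d n}. real (\<nu> n m - \<nu> n (m - 1)) \<le> V)"
    and A5: "\<forall>m::nat. 1 \<le> m \<longrightarrow> (\<exists>\<theta>bar>0. \<exists>K>0. \<forall>n\<ge>K. m \<le> d n \<and> \<theta> n m \<ge> \<theta>bar)"
    and A6: "\<forall>\<^sub>F n in sequentially. \<exists>m'\<in>{1..d n - 1}.
                    (\<forall>m\<in>{2..m'}. R n m < R n (m - 1))
                  \<and> (\<forall>m\<in>{m'<..d n}. R n m \<ge> R n (m - 1))
                  \<and> R n (d n) > R n (d n - 1)"
    and M1: "(\<lambda>n. real (M n) / real (mstar2 n)) \<longlonglongrightarrow> 0"
  shows "(\<lambda>n. Rw n (wstar n) / R n (mstar n)) \<longlonglongrightarrow> 1"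
proof -
  obtain c1 c2 where c: "0 < c1" "c1 \<le> c2"
    and eig: "\<forall>\<^sub>F n in sequentially. \<forall>k. eigenvalue (\<Omega> n) k \<longrightarrow> c1 < k \<and> k < c2"
    using A2 by blast
  obtain V where incr: "\<forall>\<^sub>F n in sequentially. \<forall>m\<in>{1..d n}. real (\<nu> n m - \<nu> n (m - 1)) \<le> V"
    using A4 by blast
  have d_pos: "\<forall>\<^sub>F n in sequentially. 1 \<le> d n"
    using A5[rule_format, of 1] by (auto simp: eventually_sequentially)
  have small: "\<forall>\<^sub>F n in sequentially. real (M n) / real (mstar2 n) < 1/2"
    using order_tendstoD(2)[OF M1, of "1/2"] by simp
  have bound: "\<forall>\<^sub>F n in sequentially.
      \<bar>Rw n (wstar n) / R n (mstar n) - 1\<bar> \<le> (2 * (c2 * V) / c1) * (real (M n) / real (mstar2 n))"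
    using design cov nested full_rank Mbounds mstar_min mstar2_min wstar_min eig incr d_pos small
  proof eventually_elim
    case (elim n)
    have min: "\<forall>m\<in>{1..M n}. R n (mstar n) \<le> R n m" "\<forall>m\<in>{1..q n}. R n (mstar2 n) \<le> R n m"
      "\<forall>w\<in>weight_set (M n). Rw n (wstar n) \<le> Rw n w"
      using elim(6-8) by (auto intro: less_imp_le)
    have "\<mu> n \<in> carrier_vec n" using elim(1) by (auto intro: mult_mat_vec_carrier)
    show ?case
      unfolding R_def Rw_def
      by (rule risk_ratio_bound[where n = n and p = "p n" and q = "q n"])
        (use elim min c \<open>\<mu> n \<in> carrier_vec n\<close> in \<open>simp_all add: R_def Rw_def d_def\<close>)
  qed
  have "(\<lambda>n. (2 * (c2 * V) / c1) * (real (M n) / real (mstar2 n))) \<longlonglongrightarrow> 0"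
    using tendsto_mult_right_zero[OF M1] .
  thus ?thesis
  proof (rule metric_tendsto_imp_tendsto)
    show "\<forall>\<^sub>F n in sequentially. dist (Rw n (wstar n) / R n (mstar n)) 1
        \<le> dist ((2 * (c2 * V) / c1) * (real (M n) / real (mstar2 n))) 0"
      using bound by eventually_elim (metis dist_real_def diff_zero abs_ge_self order_trans)
  qed
qed

end
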